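(* For any $U\in(0,1]$, if $f(U)\le\frac{25C}{(\lambda^* )^2}+\frac{g(\lambda^* )}{\epsilon^2}$, then with $L=\sqrt{\frac{C}{C/U^2+(g(U)-1)/\epsilon^2}}$ we have $f(\lambda)\le50f(\lambda^* )$ for every $\lambda\in[L,U]$.
   Context: $\epsilon\in(0,1)$, $K\ge1$, $C>K$, $g:[0,1]\to[1,K]$ non-decreasing, $f(\lambda)=\frac{C}{\lambda^2}+\frac{g(\lambda)}{\epsilon^2}$, and $\lambda^*\in(0,1]$ a minimizer of $f$ over $[0,1]$. *)

theory Defs
  imports Complex_Main
begin

definition fB :: "real \<Rightarrow> real \<Rightarrow> (real \<Rightarrow> real) \<Rightarrow> real \<Rightarrow> real" where
  "fB eps C g lam = C / lam^2 + g lam / eps^2"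

end

theory Submission
  imports Defs
begin

(* On [L, U] the curvature term C / lam^2 is at most C / L^2 = C / U^2 + (g U - 1) / eps^2 and
   the monotone term g lam / eps^2 is at most g U / eps^2, so f lam \<le> 2 f U.  The hypothesis on
   f U then gives f lam \<le> 2 (25 C / lams^2 + g lams / eps^2) \<le> 50 f lams. *)

lemma div_square_le_of_sqrt_div_le:
  fixes C D x :: real
  assumes "0 < C" "0 < D" "sqrt (C / D) \<le> x"
  shows "C / x^2 \<le> D"
proof -
  have "0 < sqrt (C / D)" using assms by simp
  then have "0 < x" using assms(3) by linarith
  have "C / D \<le> x^2"
    using assms(3) \<open>0 < sqrt (C / D)\<close> power_mono[of "sqrt (C / D)" x 2] by simp
  with assms \<open>0 < x\<close> show ?thesis
    by (simp add: field_simps)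
qed

lemma fB_le_twice_upper_endpoint:
  fixes eps C U lam :: real and g :: "real \<Rightarrow> real"
  assumes "0 < C" "0 < U" "1 \<le> g U"
    and lower: "sqrt (C / (C / U^2 + (g U - 1) / eps^2)) \<le> lam"
    and g_le: "g lam \<le> g U"
  shows "fB eps C g lam \<le> 2 * fB eps C g U"
proof -
  define D where "D = C / U^2 + (g U - 1) / eps^2"
  have "0 < C / U^2" "0 \<le> (g U - 1) / eps^2"
    using assms by auto
  then have "0 < D" unfolding D_def by linarith
  then have "C / lam^2 \<le> D"
    using div_square_le_of_sqrt_div_le \<open>0 < C\<close> lower unfolding D_def by blast
  moreover have "g lam / eps^2 \<le> g U / eps^2"
    using g_le by (simp add: divide_right_mono)
  ultimately have "fB eps C g lam \<le> D + g U / eps^2"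
    unfolding fB_def by linarith
  also have "\<dots> = 2 * fB eps C g U - (C / U^2 + 1 / eps^2)"
    unfolding D_def fB_def by (simp add: diff_divide_distrib)
  also have "\<dots> \<le> 2 * fB eps C g U"
  proof -
    have "0 \<le> 1 / eps^2" by simp
    with \<open>0 < C / U^2\<close> show ?thesis by linarith
  qed
  finally show ?thesis .
qed

theorem lemmaB6:
  fixes eps K C U lams :: real and g :: "real \<Rightarrow> real"
  assumes eps: "0 < eps" "eps < 1"
    and K: "K \<ge> 1" and CK: "C > K"
    and g_range: "\<And>x. x \<in> {0..1} \<Longrightarrow> g x \<in> {1..K}"
    and g_mono: "mono_on {0..1} g"
    and lam_s: "lams \<in> {0<..1}"
    and lam_min: "\<And>x. x \<in> {0<..1} \<Longrightarrow> fB eps C g lams \<le> fB eps C g x"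
    and U: "U \<in> {0<..1}"
    and hU: "fB eps C g U \<le> 25 * C / lams^2 + g lams / eps^2"
  shows "\<forall>lam \<in> {sqrt (C / (C / U^2 + (g U - 1) / eps^2)) .. U}.
           fB eps C g lam \<le> 50 * fB eps C g lams"
proof
  fix lam assume lam: "lam \<in> {sqrt (C / (C / U^2 + (g U - 1) / eps^2)) .. U}"
  have "0 < C" using K CK by linarith
  have gU: "1 \<le> g U" using g_range U by auto
  have "0 < C / U^2 + (g U - 1) / eps^2"
    using \<open>0 < C\<close> U gU by (intro add_pos_nonneg) auto
  then have "0 < sqrt (C / (C / U^2 + (g U - 1) / eps^2))"
    using \<open>0 < C\<close> by simp
  then have "0 < lam" using lam by (meson atLeastAtMost_iff less_le_trans)
  then have "g lam \<le> g U"
    using lam U by (intro mono_onD[OF g_mono]) auto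
  then have "fB eps C g lam \<le> 2 * fB eps C g U"
    using fB_le_twice_upper_endpoint \<open>0 < C\<close> U gU lam by auto
  also have "\<dots> \<le> 2 * (25 * C / lams^2 + g lams / eps^2)"
    using hU by simp
  also have "\<dots> \<le> 50 * fB eps C g lams"
  proof -
    have "0 \<le> g lams / eps^2" using g_range[of lams] lam_s by auto
    then show ?thesis unfolding fB_def by simp
  qed
  finally show "fB eps C g lam \<le> 50 * fB eps C g lams" .
qed

end
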